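(* Consider the setting described in the context and suppose the stepsizes satisfy conditions (A), (B) and (C). Let $u^\star=(x^\star,y^\star)$ satisfy $0\in F(x^\star)+A^Ty^\star$ and $0\in G(y^\star)-Ax^\star$. Then there is a constant $C_L$ (possibly negative) such that the PDHG iterates satisfy $\|u_{k+1}-u^\star\|_{M_k}^2\ge C_L$ for all $k$.
   Context: Let $A\in\mathbb{R}^{M\times N}$, let $f$ and $g$ be convex functions on $\mathbb{R}^N$ and $\mathbb{R}^M$, and let $X\subset\mathbb{R}^N$, $Y\subset\mathbb{R}^M$ be convex sets; consider the saddle-point problem $\min_{x\in X}\max_{y\in Y} f(x)+y^TAx-g(y)$. Let $\chi_C$ denote the characteristic function of a set $C$ ($0$ on $C$, $+\infty$ off $C$), and let $F=\partial(f+\chi_X)$, $G=\partial(g+\chi_Y)$. It is assumed that the problem is feasible (such $u^\star$ exists) and that the minimizations below have solutions. The PDHG method with stepsizes $\tau_k,\sigma_k>0$ starts from $x_0,y_0$ and iterates $x_{k+1}=\arg\min_{x\in X} f(x)+\frac{1}{2\tau_k}\|x-(x_k-\tau_kA^Ty_k)\|^2$, $y_{k+1}=\arg\min_{y\in Y} g(y)+\frac{1}{2\sigma_k}\|y-(y_k+\sigma_kA(2x_{k+1}-x_k))\|^2$. Write $u_k=(x_k,y_k)$, $M_k=\begin{pmatrix}\tau_k^{-1}I & -A^T\\ -A & \sigma_k^{-1}I\end{pmatrix}$, $H_k=\begin{pmatrix}\tau_k^{-1}I & 0\\ 0 & \sigma_k^{-1}I\end{pmatrix}$, and for a symmetric (possibly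 indefinite) matrix $M$, $\|u\|_M^2:=u^TMu$. Let $\phi_k=\max\{(\tau_k-\tau_{k+1})/\tau_k,\ (\sigma_k-\sigma_{k+1})/\sigma_k,\ 0\}$. Conditions: (A) the sequences $\{\tau_k\}$ and $\{\sigma_k\}$ are bounded; (B) $\sum_{k\ge0}\phi_k<C_\phi<\infty$ for some constant $C_\phi$; (C) either (C1) there is a constant $L$ with $\tau_k\sigma_k<L<\rho(A^TA)^{-1}$ for all $k>0$ ($\rho$ = spectral radius), or (C2) either $X$ or $Y$ is bounded and there is $c\in(0,1)$ with $\|u_{k+1}-u_k\|_{M_k}^2\ge c\|u_{k+1}-u_k\|_{H_k}^2$ for all $k>0$. *)

theory Defs
  imports "HOL-Analysis.Analysis"
begin

text \<open>Subdifferential of the extended-valued function f + chi_C at x,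
  for a real-valued f (f + chi_C is +infinity off C).\<close>
definition subdiff_on :: "('a::real_inner \<Rightarrow> real) \<Rightarrow> 'a set \<Rightarrow> 'a \<Rightarrow> 'a set" where
  "subdiff_on f C x = {v. x \<in> C \<and> (\<forall>z\<in>C. f x + v \<bullet> (z - x) \<le> f z)}"

definition spectral_radius :: "real^'n^'n \<Rightarrow> real" where
  "spectral_radius B = Sup {cmod l | l. \<exists>v::complex^'n. v \<noteq> 0 \<and>
       (\<chi> i j. complex_of_real (B $ i $ j)) *v v = l *s v}"

text \<open>The (possibly indefinite) quadratic form u^T M u with
  M = [[tau^-1 I, -A^T], [-A, sigma^-1 I]], u = (x,y).\<close>
definition M_norm2 :: "real \<Rightarrow> real \<Rightarrow> real^'n^'m \<Rightarrow> real^'n \<Rightarrow> real^'m \<Rightarrow> real" where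
  "M_norm2 \<tau> \<sigma> A x y =
     inverse \<tau> * (x \<bullet> x) - x \<bullet> (transpose A *v y) - y \<bullet> (A *v x) + inverse \<sigma> * (y \<bullet> y)"

definition H_norm2 :: "real \<Rightarrow> real \<Rightarrow> real^'n \<Rightarrow> real^'m \<Rightarrow> real" where
  "H_norm2 \<tau> \<sigma> x y = inverse \<tau> * (x \<bullet> x) + inverse \<sigma> * (y \<bullet> y)"

end

(* Completing the square in the dual component gives
     |(dx,dy)|_M^2 = |dx|^2/tau - sigma |A dx|^2 + |dy - sigma A dx|^2/sigma
                   >= |dx|^2/tau - sigma |A dx|^2.
   Under (C1), the Rayleigh bound |A dx|^2 <= rho(A^T A) |dx|^2 together with
   tau_k sigma_k rho(A^T A) <= 1 makes M_k positive semidefinite for k > 0.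
   Under (C2) with X bounded, the iterates x_(k+1) lie in X, so |A x_(k+1) - A x*| is
   bounded, and sigma_k is bounded by (A); bounded Y is the same argument for the
   transposed problem (swap x and y, tau and sigma, A and A^T). *)

theory Submission
  imports Defs
begin

lemma inner_transpose_matrix_vector:
  "(x::real^'n) \<bullet> (transpose (A::real^'n^'m) *v y) = (A *v x) \<bullet> y"
  by (metis dot_lmul_matrix inner_commute transpose_matrix_vector)

lemma M_norm2_eq:
  "M_norm2 \<tau> \<sigma> A dx dy =
     inverse \<tau> * (norm dx)\<^sup>2 - 2 * ((A *v dx) \<bullet> dy) + inverse \<sigma> * (norm dy)\<^sup>2"
  unfolding M_norm2_def inner_transpose_matrix_vector power2_norm_eq_inner
  by (simp add: inner_commute)

lemma M_norm2_transpose: "M_norm2 \<tau> \<sigma> A dx dy = M_norm2 \<sigma> \<tau> (transpose A) dy dx"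
  unfolding M_norm2_eq inner_commute[of "transpose A *v dy"] inner_transpose_matrix_vector
  by (simp add: inner_commute)

lemma M_norm2_complete_square:
  assumes "\<sigma> \<noteq> 0"
  shows "M_norm2 \<tau> \<sigma> A dx dy =
    inverse \<tau> * (norm dx)\<^sup>2 - \<sigma> * (norm (A *v dx))\<^sup>2
      + inverse \<sigma> * (norm (dy - \<sigma> *\<^sub>R (A *v dx)))\<^sup>2"
  using assms unfolding M_norm2_eq power2_norm_eq_inner
  by (simp add: inner_diff_left inner_diff_right inner_commute field_simps power2_eq_square)

lemma M_norm2_ge:
  assumes "\<sigma> > 0"
  shows "inverse \<tau> * (norm dx)\<^sup>2 - \<sigma> * (norm (A *v dx))\<^sup>2 \<le> M_norm2 \<tau> \<sigma> A dx dy"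
  using assms unfolding M_norm2_complete_square[OF less_imp_neq[OF assms, symmetric]]
  by simp

(* Only needed to see that the set in spectral_radius is bounded above, so that its Sup
   really dominates every eigenvalue modulus. *)
lemma cmod_eigenvalue_le_sum_abs:
  fixes B :: "real^'n^'n" and v :: "complex^'n"
  assumes "v \<noteq> 0" "(\<chi> i j. complex_of_real (B $ i $ j)) *v v = l *s v"
  shows "cmod l \<le> (\<Sum>i\<in>UNIV. \<Sum>j\<in>UNIV. \<bar>B $ i $ j\<bar>)"
proof -
  have "Max (range (\<lambda>j. cmod (v $ j))) \<in> range (\<lambda>j. cmod (v $ j))"
    by (rule Max_in) auto
  then obtain i where "cmod (v $ i) = Max (range (\<lambda>j. cmod (v $ j)))"
    by (metis imageE)
  then have i: "cmod (v $ j) \<le> cmod (v $ i)" for j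
    by simp
  have "cmod (v $ i) > 0"
  proof (rule ccontr)
    assume "\<not> cmod (v $ i) > 0"
    then have "v $ j = 0" for j
      using i[of j] by simp
    then show False
      using assms(1) by (simp add: vec_eq_iff)
  qed
  have "l * v $ i = (\<Sum>j\<in>UNIV. complex_of_real (B $ i $ j) * v $ j)"
    using arg_cong[OF assms(2), of "\<lambda>w. w $ i"] by (simp add: matrix_vector_mult_def)
  then have "cmod l * cmod (v $ i) \<le> (\<Sum>j\<in>UNIV. \<bar>B $ i $ j\<bar> * cmod (v $ j))"
    by (metis (no_types, lifting) norm_mult norm_of_real norm_sum sum.cong)
  also have "\<dots> \<le> (\<Sum>j\<in>UNIV. \<bar>B $ i $ j\<bar>) * cmod (v $ i)"
    by (auto simp: sum_distrib_right i intro!: sum_mono mult_left_mono)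
  finally have "cmod l \<le> (\<Sum>j\<in>UNIV. \<bar>B $ i $ j\<bar>)"
    using \<open>cmod (v $ i) > 0\<close> by simp
  also have "\<dots> \<le> (\<Sum>i\<in>UNIV. \<Sum>j\<in>UNIV. \<bar>B $ i $ j\<bar>)"
    by (rule member_le_sum) (auto intro: sum_nonneg)
  finally show ?thesis .
qed

lemma eigenvalue_le_spectral_radius:
  fixes B :: "real^'n^'n"
  assumes "B *v v = \<mu> *\<^sub>R v" "v \<noteq> 0"
  shows "\<bar>\<mu>\<bar> \<le> spectral_radius B"
  unfolding spectral_radius_def
proof (rule cSup_upper)
  define w where "w = (\<chi> i. complex_of_real (v $ i))"
  have "w \<noteq> 0"
    using assms(2) by (auto simp: w_def vec_eq_iff)
  moreover have "(\<chi> i j. complex_of_real (B $ i $ j)) *v w = complex_of_real \<mu> *s w"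
    using arg_cong[OF assms(1), of "\<lambda>u. complex_of_real (u $ _)"]
    by (simp add: w_def vec_eq_iff matrix_vector_mult_def flip: of_real_mult of_real_sum)
  ultimately show "\<bar>\<mu>\<bar> \<in> {cmod l |l. \<exists>v::complex^'n. v \<noteq> 0 \<and>
       (\<chi> i j. complex_of_real (B $ i $ j)) *v v = l *s v}"
    by force
  show "bdd_above {cmod l |l. \<exists>v::complex^'n. v \<noteq> 0 \<and>
       (\<chi> i j. complex_of_real (B $ i $ j)) *v v = l *s v}"
    by (rule bdd_aboveI[where M = "\<Sum>i\<in>UNIV. \<Sum>j\<in>UNIV. \<bar>B $ i $ j\<bar>"])
      (auto dest: cmod_eigenvalue_le_sum_abs)
qed

lemma linear_coeff_zero_if_quadratic_nonneg:
  fixes b q :: real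
  assumes "\<And>t. 0 \<le> 2 * t * b + t\<^sup>2 * q"
  shows "b = 0"
proof (rule ccontr)
  assume "b \<noteq> 0"
  define a where "a = \<bar>q\<bar>"
  define t where "t = - b / (a + 1)"
  have "a \<ge> 0" by (simp add: a_def)
  have "2 * t * b + t\<^sup>2 * q \<le> 2 * t * b + t\<^sup>2 * a"
    by (simp add: a_def mult_left_mono)
  also have "\<dots> = - b\<^sup>2 * (a + 2) / (a + 1)\<^sup>2"
    using \<open>a \<ge> 0\<close> unfolding t_def
    by (simp add: divide_simps) (simp add: algebra_simps power2_eq_square)
  also have "\<dots> < 0"
    using \<open>b \<noteq> 0\<close> \<open>a \<ge> 0\<close> by (simp add: divide_neg_pos)
  finally show False
    using assms[of t] by simp
qed

lemma rayleigh_maximizer_is_eigenvector: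
  fixes A :: "real^'n^'m"
  assumes le: "\<And>w. (norm (A *v w))\<^sup>2 \<le> \<mu> * (norm w)\<^sup>2"
    and eq: "(norm (A *v v))\<^sup>2 = \<mu> * (norm v)\<^sup>2"
  shows "(transpose A ** A) *v v = \<mu> *\<^sub>R v"
proof -
  have gram: "((transpose A ** A) *v v) \<bullet> w = (A *v v) \<bullet> (A *v w)" for w
    by (metis inner_commute inner_transpose_matrix_vector matrix_vector_mul_assoc)
  \<comment> \<open>t \<mapsto> \<mu> |v + t w|^2 - |A (v + t w)|^2 is nonnegative and vanishes at t = 0,
      so its linear coefficient is zero.\<close>
  have orth: "\<mu> * (v \<bullet> w) - (A *v v) \<bullet> (A *v w) = 0" for w
  proof (rule linear_coeff_zero_if_quadratic_nonneg)
    fix t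
    have "(norm (A *v (v + t *\<^sub>R w)))\<^sup>2 \<le> \<mu> * (norm (v + t *\<^sub>R w))\<^sup>2"
      by (rule le)
    then show "0 \<le> 2 * t * (\<mu> * (v \<bullet> w) - (A *v v) \<bullet> (A *v w))
                  + t\<^sup>2 * (\<mu> * (norm w)\<^sup>2 - (norm (A *v w))\<^sup>2)"
      using eq unfolding power2_norm_eq_inner
      by (simp add: matrix_vector_right_distrib matrix_vector_mult_scaleR inner_add_left
          inner_add_right inner_commute power2_eq_square algebra_simps)
  qed
  define z where "z = \<mu> *\<^sub>R v - (transpose A ** A) *v v"
  have "z \<bullet> z = \<mu> * (v \<bullet> z) - (A *v v) \<bullet> (A *v z)"
    by (simp add: z_def inner_diff_left gram[symmetric])
  then have "z = 0"
    using orth by simp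
  then show ?thesis
    by (simp add: z_def)
qed

lemma rayleigh_maximizer_exists:
  fixes A :: "real^'n^'m"
  obtains v \<mu> where "v \<noteq> 0" "(norm (A *v v))\<^sup>2 = \<mu> * (norm v)\<^sup>2"
    "\<And>w. (norm (A *v w))\<^sup>2 \<le> \<mu> * (norm w)\<^sup>2"
proof -
  have "continuous_on (sphere 0 1) (\<lambda>w. (norm (A *v w))\<^sup>2)"
    by (intro continuous_intros linear_continuous_on) auto
  moreover have "(axis undefined 1 :: real^'n) \<in> sphere 0 1"
    by simp
  ultimately obtain v where v: "v \<in> sphere 0 1"
    and max: "\<forall>w\<in>sphere 0 1. (norm (A *v w))\<^sup>2 \<le> (norm (A *v v))\<^sup>2"
    using continuous_attains_sup[OF compact_sphere] by blast
  have "(norm (A *v w))\<^sup>2 \<le> (norm (A *v v))\<^sup>2 * (norm w)\<^sup>2" for w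
  proof (cases "w = 0")
    case False
    then have "(norm (A *v w) / norm w)\<^sup>2 \<le> (norm (A *v v))\<^sup>2"
      using max[rule_format, of "inverse (norm w) *\<^sub>R w"]
      by (simp add: matrix_vector_mult_scaleR divide_inverse_commute)
    then show ?thesis
      using False by (simp add: power_divide divide_le_eq)
  qed simp
  then show thesis
    using v by (intro that[of v]) auto
qed

lemma norm_matrix_vector_le_spectral_radius:
  fixes A :: "real^'n^'m"
  shows "(norm (A *v u))\<^sup>2 \<le> spectral_radius (transpose A ** A) * (norm u)\<^sup>2"
proof -
  obtain v \<mu> where v: "v \<noteq> 0" "(norm (A *v v))\<^sup>2 = \<mu> * (norm v)\<^sup>2"
    and le: "\<And>w. (norm (A *v w))\<^sup>2 \<le> \<mu> * (norm w)\<^sup>2"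
    using rayleigh_maximizer_exists[of A] by blast
  have "\<bar>\<mu>\<bar> \<le> spectral_radius (transpose A ** A)"
    using rayleigh_maximizer_is_eigenvector[OF le v(2)] v(1) by (rule eigenvalue_le_spectral_radius)
  then show ?thesis
    using le[of u] by (meson abs_ge_self mult_right_mono order_trans zero_le_power2)
qed

lemma M_norm2_nonneg:
  fixes A :: "real^'n^'m"
  assumes "\<tau> > 0" "\<sigma> > 0" "\<tau> * \<sigma> * spectral_radius (transpose A ** A) \<le> 1"
  shows "0 \<le> M_norm2 \<tau> \<sigma> A dx dy"
proof -
  have "\<sigma> * (norm (A *v dx))\<^sup>2 \<le> \<sigma> * spectral_radius (transpose A ** A) * (norm dx)\<^sup>2"
    using norm_matrix_vector_le_spectral_radius assms(2)
    by (simp add: mult.assoc mult_left_mono)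
  also have "\<dots> \<le> inverse \<tau> * (norm dx)\<^sup>2"
    using assms by (intro mult_right_mono) (simp_all add: field_simps)
  finally show ?thesis
    using M_norm2_ge[OF assms(2), of \<tau> dx A dy] by linarith
qed

lemma M_norm2_bounded_below_if_steps_small:
  fixes A :: "real^'n^'m" and \<tau> \<sigma> :: "nat \<Rightarrow> real"
  assumes "\<And>k. \<tau> k > 0" "\<And>k. \<sigma> k > 0"
    and "\<forall>k>0. \<tau> k * \<sigma> k < L" "L * spectral_radius (transpose A ** A) < 1"
  shows "\<exists>C. \<forall>k. C \<le> M_norm2 (\<tau> k) (\<sigma> k) A (u k) (v k)"
proof -
  let ?\<rho> = "spectral_radius (transpose A ** A)"
  have nonneg: "0 \<le> M_norm2 (\<tau> k) (\<sigma> k) A (u k) (v k)" if "k > 0" for k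
  proof (rule M_norm2_nonneg)
    have "0 < \<tau> k * \<sigma> k"
      using assms(1,2) by simp
    show "\<tau> k * \<sigma> k * ?\<rho> \<le> 1"
    proof (cases "?\<rho> \<le> 0")
      case True
      then show ?thesis
        using \<open>0 < \<tau> k * \<sigma> k\<close> mult_nonneg_nonpos[of "\<tau> k * \<sigma> k" ?\<rho>] by simp
    next
      case False
      then have "\<tau> k * \<sigma> k * ?\<rho> \<le> L * ?\<rho>"
        using assms(3) that by (intro mult_right_mono) (auto simp: less_imp_le)
      then show ?thesis
        using assms(4) by linarith
    qed
  qed (use assms in auto)
  have "min 0 (M_norm2 (\<tau> 0) (\<sigma> 0) A (u 0) (v 0)) \<le> M_norm2 (\<tau> k) (\<sigma> k) A (u k) (v k)"
    for k
  proof (cases "k = 0")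
    case False
    then have "0 \<le> M_norm2 (\<tau> k) (\<sigma> k) A (u k) (v k)"
      by (intro nonneg) simp
    then show ?thesis
      by (rule min.coboundedI1)
  qed simp
  then show ?thesis
    by blast
qed

lemma M_norm2_bounded_below_if_primal_bounded:
  fixes A :: "real^'n^'m"
  assumes "\<And>k. \<tau> k > 0" "\<And>k. \<sigma> k > 0" "\<And>k. \<sigma> k \<le> B" "bounded (range u)"
  shows "\<exists>C. \<forall>k. C \<le> M_norm2 (\<tau> k) (\<sigma> k) A (u k) (v k)"
proof -
  have "bounded ((*v) A ` range u)"
    using assms(4) by (rule bounded_linear_image) simp
  then obtain R where R: "\<And>k. norm (A *v u k) \<le> R"
    by (auto simp: bounded_iff)
  have "- (B * R\<^sup>2) \<le> M_norm2 (\<tau> k) (\<sigma> k) A (u k) (v k)" for k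
  proof -
    have "\<sigma> k * (norm (A *v u k))\<^sup>2 \<le> B * R\<^sup>2"
      using assms(2,3)[of k] R[of k] by (intro mult_mono power_mono) auto
    moreover have "0 \<le> inverse (\<tau> k) * (norm (u k))\<^sup>2"
      using assms(1)[of k] by simp
    ultimately show ?thesis
      using M_norm2_ge[OF assms(2)[of k], of "\<tau> k" "u k" A "v k"] by linarith
  qed
  then show ?thesis
    by blast
qed

theorem mainTheorem4:
  fixes A :: "real^'n^'m"
    and f :: "real^'n \<Rightarrow> real" and g :: "real^'m \<Rightarrow> real"
    and X :: "(real^'n) set" and Y :: "(real^'m) set"
    and \<tau> \<sigma> :: "nat \<Rightarrow> real"
    and x :: "nat \<Rightarrow> real^'n" and y :: "nat \<Rightarrow> real^'m"
    and xs :: "real^'n" and ys :: "real^'m"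
  assumes f_convex: "convex_on UNIV f" and g_convex: "convex_on UNIV g"
    and X_convex: "convex X" and Y_convex: "convex Y"
    and tau_pos: "\<And>k. \<tau> k > 0" and sigma_pos: "\<And>k. \<sigma> k > 0"
    and x_step: "\<And>k. is_arg_min
          (\<lambda>z. f z + (1 / (2 * \<tau> k)) * (norm (z - (x k - \<tau> k *\<^sub>R (transpose A *v y k))))\<^sup>2)
          (\<lambda>z. z \<in> X) (x (Suc k))"
    and y_step: "\<And>k. is_arg_min
          (\<lambda>w. g w + (1 / (2 * \<sigma> k)) *
               (norm (w - (y k + \<sigma> k *\<^sub>R (A *v (2 *\<^sub>R x (Suc k) - x k)))))\<^sup>2)
          (\<lambda>w. w \<in> Y) (y (Suc k))"
    and condA: "\<exists>B. \<forall>k. \<tau> k \<le> B \<and> \<sigma> k \<le> B"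
    and condB: "\<exists>C\<phi>. \<forall>n. (\<Sum>k<n. max (max ((\<tau> k - \<tau> (Suc k)) / \<tau> k)
                                             ((\<sigma> k - \<sigma> (Suc k)) / \<sigma> k)) 0) < C\<phi>"
    and condC:
      "(\<exists>L. (\<forall>k>0. \<tau> k * \<sigma> k < L) \<and> L * spectral_radius (transpose A ** A) < 1)
       \<or> ((bounded X \<or> bounded Y) \<and>
          (\<exists>c. 0 < c \<and> c < 1 \<and>
             (\<forall>k>0. M_norm2 (\<tau> k) (\<sigma> k) A (x (Suc k) - x k) (y (Suc k) - y k)
                    \<ge> c * H_norm2 (\<tau> k) (\<sigma> k) (x (Suc k) - x k) (y (Suc k) - y k))))"
    and saddle_x: "(0::real^'n) \<in> (\<lambda>v. v + transpose A *v ys) ` subdiff_on f X xs"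
    and saddle_y: "(0::real^'m) \<in> (\<lambda>w. w - A *v xs) ` subdiff_on g Y ys"
  shows "\<exists>CL. \<forall>k. M_norm2 (\<tau> k) (\<sigma> k) A (x (Suc k) - xs) (y (Suc k) - ys) \<ge> CL"
proof -
  have iterates_in: "x (Suc k) \<in> X" "y (Suc k) \<in> Y" for k
    using x_step[of k] y_step[of k] by (auto simp: is_arg_min_def)
  obtain B where B: "\<And>k. \<tau> k \<le> B" "\<And>k. \<sigma> k \<le> B"
    using condA by blast
  from condC consider L where "\<forall>k>0. \<tau> k * \<sigma> k < L" "L * spectral_radius (transpose A ** A) < 1"
    | "bounded X" | "bounded Y"
    by blast
  then show ?thesis
  proof cases
    case 1
    then show ?thesis
      using tau_pos sigma_pos by (intro M_norm2_bounded_below_if_steps_small) auto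
  next
    case 2
    then have "bounded (range (\<lambda>k. x (Suc k) - xs))"
      by (rule bounded_subset[OF bounded_translation_minus]) (auto intro: iterates_in)
    then show ?thesis
      using tau_pos sigma_pos B(2) by (intro M_norm2_bounded_below_if_primal_bounded) auto
  next
    case 3
    then have "bounded (range (\<lambda>k. y (Suc k) - ys))"
      by (rule bounded_subset[OF bounded_translation_minus]) (auto intro: iterates_in)
    then have "\<exists>C. \<forall>k. C \<le> M_norm2 (\<sigma> k) (\<tau> k) (transpose A) (y (Suc k) - ys) (x (Suc k) - xs)"
      using tau_pos sigma_pos B(1) by (intro M_norm2_bounded_below_if_primal_bounded) auto
    then show ?thesis
      by (simp add: M_norm2_transpose[symmetric])
  qed
qed

end
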